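(* Let $r\ge2$ and $h_s:=e_s-f_s\in\mathbb{K}[\mathcal{S}_{r+1}]$. Then for every Young tableau $t$ (standard or not) of frame $(r,1)\vdash r+1$, one has $h_s\cdot e_t\neq h_s$. In particular no such $e_t$ generates the minimal left ideal $\mathbb{K}[\mathcal{S}_{r+1}]\cdot h_s$.
   Context: $\mathbb{K}\in\{\mathbb{R},\mathbb{C}\}$; group ring product $(p\cdot q)(i)=p(q(i))$. $\tilde{\mathcal S}_r=\{p\in\mathcal{S}_{r+1}:p(r+1)=r+1\}$, $e_s=\frac1{r!}\sum_{p\in\tilde{\mathcal S}_r}p$, $f_s=\frac1{(r+1)!}\sum_{p\in\mathcal{S}_{r+1}}p$. For a Young tableau $t$ (a filling of a Young frame with $1,\ldots,r+1$, each once), $\mathcal{H}_t$, $\mathcal{V}_t$ are the row- and column-preserving permutation groups, $y_t=\sum_{p\in\mathcal{H}_t}\sum_{q\in\mathcal{V}_t}\mathrm{sign}(q)\,p\cdot q$, and $e_t=\mu_ty_t$ with the nonzero constant $\mu_t$ making $e_t$ idempotent. The frame $(r,1)$ has a first row of $r$ boxes and a second row of one box. *)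

theory Defs
  imports Complex_Main "HOL-Combinatorics.Permutations"
begin

definition Sym :: "nat \<Rightarrow> (nat \<Rightarrow> nat) set" where
  "Sym n = {p. p permutes {1..n}}"

text \<open>Elements of the group ring K[S_n] are represented as coefficient functions
  (nat \<Rightarrow> nat) \<Rightarrow> K; only the values on Sym n matter.\<close>
definition gr_mult :: "nat \<Rightarrow> ((nat \<Rightarrow> nat) \<Rightarrow> 'a::comm_ring_1) \<Rightarrow> ((nat \<Rightarrow> nat) \<Rightarrow> 'a) \<Rightarrow> ((nat \<Rightarrow> nat) \<Rightarrow> 'a)" where
  "gr_mult n x y = (\<lambda>\<sigma>. \<Sum>p\<in>Sym n. \<Sum>q\<in>Sym n. if p \<circ> q = \<sigma> then x p * y q else 0)"

definition gr_elems :: "nat \<Rightarrow> ((nat \<Rightarrow> nat) \<Rightarrow> 'a::comm_ring_1) set" where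
  "gr_elems n = {x. \<forall>\<sigma>. \<sigma> \<notin> Sym n \<longrightarrow> x \<sigma> = 0}"

definition gr_left_ideal :: "nat \<Rightarrow> ((nat \<Rightarrow> nat) \<Rightarrow> 'a::comm_ring_1) \<Rightarrow> ((nat \<Rightarrow> nat) \<Rightarrow> 'a) set" where
  "gr_left_ideal n x = {gr_mult n a x | a. a \<in> gr_elems n}"

definition e_s :: "nat \<Rightarrow> ((nat \<Rightarrow> nat) \<Rightarrow> 'a::field)" where
  "e_s r = (\<lambda>\<sigma>. if \<sigma> \<in> Sym (r+1) \<and> \<sigma> (r+1) = r+1 then 1 / of_nat (fact r) else 0)"

definition f_s :: "nat \<Rightarrow> ((nat \<Rightarrow> nat) \<Rightarrow> 'a::field)" where
  "f_s r = (\<lambda>\<sigma>. if \<sigma> \<in> Sym (r+1) then 1 / of_nat (fact (r+1)) else 0)"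

definition h_s :: "nat \<Rightarrow> ((nat \<Rightarrow> nat) \<Rightarrow> 'a::field)" where
  "h_s r = (\<lambda>\<sigma>. e_s r \<sigma> - f_s r \<sigma>)"

text \<open>Young frames as sets of boxes (row, column), 1-indexed.
  The frame (r,1): first row has r boxes, second row has one box.\<close>
definition frame_r1 :: "nat \<Rightarrow> (nat \<times> nat) set" where
  "frame_r1 r = {(1, j) | j. j \<in> {1..r}} \<union> {(2, 1)}"

definition young_tableau :: "nat \<Rightarrow> (nat \<times> nat) set \<Rightarrow> (nat \<times> nat \<Rightarrow> nat) \<Rightarrow> bool" where
  "young_tableau n F T \<longleftrightarrow> bij_betw T F {1..n}"

definition row_group :: "nat \<Rightarrow> (nat \<times> nat) set \<Rightarrow> (nat \<times> nat \<Rightarrow> nat) \<Rightarrow> (nat \<Rightarrow> nat) set" where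
  "row_group n F T = {p \<in> Sym n. \<forall>b\<in>F. \<exists>b'\<in>F. fst b' = fst b \<and> p (T b) = T b'}"

definition col_group :: "nat \<Rightarrow> (nat \<times> nat) set \<Rightarrow> (nat \<times> nat \<Rightarrow> nat) \<Rightarrow> (nat \<Rightarrow> nat) set" where
  "col_group n F T = {q \<in> Sym n. \<forall>b\<in>F. \<exists>b'\<in>F. snd b' = snd b \<and> q (T b) = T b'}"

definition young_y :: "nat \<Rightarrow> (nat \<times> nat) set \<Rightarrow> (nat \<times> nat \<Rightarrow> nat) \<Rightarrow> ((nat \<Rightarrow> nat) \<Rightarrow> 'a::comm_ring_1)" where
  "young_y n F T = (\<lambda>\<sigma>. \<Sum>p\<in>row_group n F T. \<Sum>q\<in>col_group n F T.
      if p \<circ> q = \<sigma> then of_int (sign q) else 0)"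

end

theory Submission
  imports Defs
begin

text \<open>The transposition \<tau> of the two entries in the first column of t lies in V_t and is odd,
  so y_t \<tau> = -y_t, and hence every z in the left ideal K[S] e_t satisfies z(\<tau>) = -z(id).
  But h_s(id) = r/(r+1)!, while h_s(\<tau>) is either h_s(id) or -1/(r+1)!, and for r \<ge> 2 neither
  equals -h_s(id). So h_s \<notin> K[S] e_t, although h_s e_t \<in> K[S] e_t and h_s \<in> K[S] h_s.\<close>

lemma finite_Sym: "finite (Sym n)"
  by (simp add: Sym_def finite_permutations)

lemma id_in_Sym: "id \<in> Sym n"
  by (simp add: Sym_def permutes_id)

lemma gr_mult_in_gr_left_ideal: "a \<in> gr_elems n \<Longrightarrow> gr_mult n a x \<in> gr_left_ideal n x"
  by (auto simp: gr_left_ideal_def)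

lemma in_gr_left_ideal_self:
  fixes x :: "(nat \<Rightarrow> nat) \<Rightarrow> 'a::comm_ring_1"
  assumes "x \<in> gr_elems n"
  shows "x \<in> gr_left_ideal n x"
proof -
  let ?one = "\<lambda>\<sigma>. if \<sigma> = id then 1 else 0 :: 'a"
  have "gr_mult n ?one x \<sigma> =
      (\<Sum>p\<in>Sym n. if p = id then \<Sum>q\<in>Sym n. if q = \<sigma> then x q else 0 else 0)" for \<sigma>
    unfolding gr_mult_def by (intro sum.cong refl) (auto cong: if_cong)
  also have "\<dots> \<sigma> = x \<sigma>" for \<sigma>
    using assms by (simp add: finite_Sym id_in_Sym gr_elems_def)
  finally have "gr_mult n ?one x = x" ..
  moreover have "?one \<in> gr_elems n"
    by (simp add: gr_elems_def id_in_Sym)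
  ultimately show ?thesis
    using gr_mult_in_gr_left_ideal by metis
qed

lemma comp_right_cancel_permutes:
  assumes "\<tau> permutes S"
  shows "p \<circ> \<tau> = q \<circ> \<tau> \<longleftrightarrow> p = q"
  by (metis assms comp_assoc comp_id permutes_inv_o(1))

lemma gr_mult_comp_right:
  assumes \<tau>: "\<tau> permutes {1..n}" and y: "\<And>q. y (q \<circ> \<tau>) = c * y q"
  shows "gr_mult n x y (\<sigma> \<circ> \<tau>) = c * gr_mult n x y \<sigma>"
proof -
  have "gr_mult n x y (\<sigma> \<circ> \<tau>) =
      (\<Sum>p\<in>Sym n. \<Sum>q\<in>Sym n. if p \<circ> (q \<circ> \<tau>) = \<sigma> \<circ> \<tau> then x p * y (q \<circ> \<tau>) else 0)"
    unfolding gr_mult_def Sym_def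
    by (rule sum.cong[OF refl], rule sum_permutations_compose_right[OF \<tau>])
  also have "\<dots> = (\<Sum>p\<in>Sym n. \<Sum>q\<in>Sym n. c * (if p \<circ> q = \<sigma> then x p * y q else 0))"
    by (intro sum.cong refl) (simp add: y comp_assoc[symmetric] comp_right_cancel_permutes[OF \<tau>])
  finally show ?thesis
    by (simp add: gr_mult_def sum_distrib_left)
qed

lemma col_group_comp_closed:
  assumes "v \<in> col_group n F T" and "\<tau> \<in> col_group n F T"
  shows "v \<circ> \<tau> \<in> col_group n F T"
proof -
  have "v \<circ> \<tau> \<in> Sym n"
    using assms permutes_compose by (auto simp: col_group_def Sym_def)
  moreover have "\<exists>c'\<in>F. snd c' = snd c \<and> (v \<circ> \<tau>) (T c) = T c'" if "c \<in> F" for c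
  proof -
    obtain c'' where "c'' \<in> F" "snd c'' = snd c" "\<tau> (T c) = T c''"
      using assms(2) \<open>c \<in> F\<close> by (auto simp: col_group_def)
    moreover obtain c' where "c' \<in> F" "snd c' = snd c''" "v (T c'') = T c'"
      using assms(1) \<open>c'' \<in> F\<close> by (auto simp: col_group_def)
    ultimately show ?thesis
      by auto
  qed
  ultimately show ?thesis
    by (simp add: col_group_def)
qed

lemma young_y_comp_col_group:
  assumes \<tau>: "\<tau> \<in> col_group n F T"
  shows "(young_y n F T (q \<circ> \<tau>) :: 'a::comm_ring_1) = of_int (sign \<tau>) * young_y n F T q"
proof -
  let ?V = "col_group n F T"
  have \<tau>_perm: "\<tau> permutes {1..n}"
    using \<tau> by (simp add: col_group_def Sym_def)
  have inj: "inj_on (\<lambda>v. v \<circ> \<tau>) ?V"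
    by (simp add: inj_on_def comp_right_cancel_permutes[OF \<tau>_perm])
  have "finite ?V"
    using finite_Sym[of n] by (rule rev_finite_subset) (auto simp: col_group_def)
  then have image: "(\<lambda>v. v \<circ> \<tau>) ` ?V = ?V"
    by (rule endo_inj_surj[OF _ _ inj]) (auto intro: col_group_comp_closed \<tau>)
  have sign: "sign (v \<circ> \<tau>) = sign v * sign \<tau>" if "v \<in> ?V" for v
    using that \<tau> unfolding col_group_def Sym_def
    by (auto intro!: sign_compose permutes_imp_permutation[OF finite_atLeastAtMost])
  have "young_y n F T (q \<circ> \<tau>) = (\<Sum>p\<in>row_group n F T. \<Sum>v\<in>?V.
      if p \<circ> (v \<circ> \<tau>) = q \<circ> \<tau> then (of_int (sign (v \<circ> \<tau>)) :: 'a) else 0)"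
    unfolding young_y_def
    by (rule sum.cong[OF refl], subst (1) image[symmetric]) (simp add: sum.reindex[OF inj])
  also have "\<dots> = (\<Sum>p\<in>row_group n F T. \<Sum>v\<in>?V.
      of_int (sign \<tau>) * (if p \<circ> v = q then of_int (sign v) else 0))"
    by (intro sum.cong refl)
      (simp add: comp_assoc[symmetric] comp_right_cancel_permutes[OF \<tau>_perm] sign mult.commute)
  finally show ?thesis
    by (simp add: young_y_def sum_distrib_left)
qed

lemma gr_left_ideal_comp_col_group:
  fixes \<mu> :: "'a::comm_ring_1"
  assumes \<tau>: "\<tau> \<in> col_group n F T" and z: "z \<in> gr_left_ideal n (\<lambda>\<sigma>. \<mu> * young_y n F T \<sigma>)"
  shows "z (\<sigma> \<circ> \<tau>) = of_int (sign \<tau>) * z \<sigma>"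
proof -
  obtain a where "z = gr_mult n a (\<lambda>\<sigma>. \<mu> * young_y n F T \<sigma>)"
    using z by (auto simp: gr_left_ideal_def)
  moreover have "\<tau> permutes {1..n}"
    using \<tau> by (simp add: col_group_def Sym_def)
  ultimately show ?thesis
    by (simp add: gr_mult_comp_right young_y_comp_col_group[OF \<tau>] mult.left_commute)
qed

lemma transpose_in_col_group:
  assumes T: "young_tableau n F T" and b: "b \<in> F" "b' \<in> F" "snd b = snd b'"
  shows "transpose (T b) (T b') \<in> col_group n F T"
proof -
  have bij: "bij_betw T F {1..n}"
    using T by (simp add: young_tableau_def)
  then have inj: "inj_on T F"
    by (rule bij_betw_imp_inj_on)
  have "transpose (T b) (T b') permutes {1..n}"
    using b bij by (intro permutes_swap_id) (auto dest: bij_betw_apply)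
  moreover have "\<exists>c'\<in>F. snd c' = snd c \<and> transpose (T b) (T b') (T c) = T c'" if "c \<in> F" for c
    using b that by (cases "c = b \<or> c = b'") (auto simp: transpose_def inj_on_eq_iff[OF inj])
  ultimately show ?thesis
    by (simp add: col_group_def Sym_def)
qed

lemma h_s_in_gr_elems: "h_s r \<in> gr_elems (r+1)"
  by (simp add: gr_elems_def h_s_def e_s_def f_s_def)

lemma h_s_eq:
  assumes "\<sigma> \<in> Sym (r+1)"
  shows "(h_s r \<sigma> :: 'a::field_char_0) =
    (if \<sigma> (r+1) = r+1 then of_nat r else -1) / fact (r+1)"
proof -
  have "(1 :: 'a) / fact r = of_nat (r+1) / fact (r+1)"
    by (simp add: fact_Suc del: of_nat_Suc)
  then show ?thesis
    using assms by (simp add: h_s_def e_s_def f_s_def diff_divide_distrib[symmetric] del: fact_Suc)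
qed

lemma h_s_neq_neg_h_s_id:
  assumes "r \<ge> 2" and \<sigma>: "\<sigma> \<in> Sym (r+1)"
  shows "(h_s r \<sigma> :: 'a::field_char_0) \<noteq> - h_s r id"
proof -
  define F where "F = (fact (r+1) :: 'a)"
  have F: "F \<noteq> 0"
    unfolding F_def by (rule fact_nonzero)
  have "h_s r \<sigma> = (if \<sigma> (r+1) = r+1 then of_nat r else -1) / F"
    unfolding F_def by (rule h_s_eq[OF \<sigma>])
  moreover have "h_s r id = of_nat r / F"
    unfolding F_def using h_s_eq[OF id_in_Sym, of r] by simp
  ultimately have "(h_s r \<sigma> + h_s r id) * F = of_nat (if \<sigma> (r+1) = r+1 then r + r else r - 1)"
    using assms(1) F by (simp add: distrib_right of_nat_diff)
  also have "\<dots> \<noteq> 0"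
    using assms(1) by simp
  finally show ?thesis
    by (auto simp: eq_neg_iff_add_eq_0)
qed

lemma h_s_notin_gr_left_ideal_young_y:
  fixes \<mu> :: "'a::field_char_0"
  assumes r: "r \<ge> 2" and T: "young_tableau (r+1) (frame_r1 r) T"
  shows "h_s r \<notin> gr_left_ideal (r+1) (\<lambda>\<sigma>. \<mu> * young_y (r+1) (frame_r1 r) T \<sigma>)"
proof
  define \<tau> where "\<tau> = transpose (T (1,1)) (T (2,1))"
  have boxes: "(1,1) \<in> frame_r1 r" "(2,1) \<in> frame_r1 r"
    using r by (auto simp: frame_r1_def)
  moreover have "inj_on T (frame_r1 r)"
    using T by (simp add: young_tableau_def bij_betw_def)
  ultimately have "T (1,1) \<noteq> T (2,1)"
    by (simp add: inj_on_eq_iff)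
  then have sign: "sign \<tau> = -1"
    by (simp add: \<tau>_def sign_swap_id)
  have \<tau>: "\<tau> \<in> col_group (r+1) (frame_r1 r) T"
    unfolding \<tau>_def using T boxes by (rule transpose_in_col_group) simp
  assume "h_s r \<in> gr_left_ideal (r+1) (\<lambda>\<sigma>. \<mu> * young_y (r+1) (frame_r1 r) T \<sigma>)"
  from gr_left_ideal_comp_col_group[OF \<tau> this, of id] have "h_s r \<tau> = - (h_s r id :: 'a)"
    by (simp add: sign)
  moreover have "\<tau> \<in> Sym (r+1)"
    using \<tau> by (simp add: col_group_def)
  ultimately show False
    using h_s_neq_neg_h_s_id[OF r] by blast
qed

lemma young_y_multiple_not_generating_h_s:
  fixes \<mu> :: "'a::field_char_0"
  assumes "r \<ge> 2" and "young_tableau (r+1) (frame_r1 r) T"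
  defines "e \<equiv> \<lambda>\<sigma>. \<mu> * young_y (r+1) (frame_r1 r) T \<sigma>"
  shows "gr_mult (r+1) (h_s r) e \<noteq> h_s r \<and> gr_left_ideal (r+1) e \<noteq> gr_left_ideal (r+1) (h_s r)"
proof -
  have "h_s r \<notin> gr_left_ideal (r+1) e"
    unfolding e_def by (rule h_s_notin_gr_left_ideal_young_y[OF assms(1,2)])
  moreover have "gr_mult (r+1) (h_s r) e \<in> gr_left_ideal (r+1) e"
    by (rule gr_mult_in_gr_left_ideal[OF h_s_in_gr_elems])
  moreover have "h_s r \<in> gr_left_ideal (r+1) (h_s r)"
    by (rule in_gr_left_ideal_self[OF h_s_in_gr_elems])
  ultimately show ?thesis
    by auto
qed

theorem theorem5:
  fixes r :: nat and T :: "nat \<times> nat \<Rightarrow> nat"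
  assumes "r \<ge> 2"
    and "young_tableau (r+1) (frame_r1 r) T"
  shows "(\<forall>\<mu>::real. \<mu> \<noteq> 0 \<longrightarrow>
            (let e = (\<lambda>\<sigma>. \<mu> * young_y (r+1) (frame_r1 r) T \<sigma>) in
               gr_mult (r+1) e e = e \<longrightarrow>
               gr_mult (r+1) (h_s r) e \<noteq> h_s r
               \<and> gr_left_ideal (r+1) e \<noteq> gr_left_ideal (r+1) (h_s r)))
       \<and> (\<forall>\<mu>::complex. \<mu> \<noteq> 0 \<longrightarrow>
            (let e = (\<lambda>\<sigma>. \<mu> * young_y (r+1) (frame_r1 r) T \<sigma>) in
               gr_mult (r+1) e e = e \<longrightarrow>
               gr_mult (r+1) (h_s r) e \<noteq> h_s r
               \<and> gr_left_ideal (r+1) e \<noteq> gr_left_ideal (r+1) (h_s r)))"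
  using young_y_multiple_not_generating_h_s[OF assms, where 'a=real]
    young_y_multiple_not_generating_h_s[OF assms, where 'a=complex]
  by (simp add: Let_def)

end
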